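(* Let $n$ be a positive integer with $n \equiv 0 \pmod 6$. Let $\mathcal{H}$ be the collection of subgroups of $S_n$ consisting of: all stabilizers in $S_n$ of partitions of $\{1,\dots,n\}$ into two blocks of size $n/2$; the alternating group $A_n$; and, for each $1\le i\le n/3-1$, all setwise stabilizers in $S_n$ of $i$-element subsets of $\{1,\dots,n\}$. Then the union of the subgroups in $\mathcal{H}$ is all of $S_n$, i.e. $\mathcal{H}$ is a cover of $S_n$.
   Context: $S_n$ is the symmetric group on $\{1,\dots,n\}$. The stabilizer of a partition $\{B_1,B_2\}$ is the set of $g\in S_n$ with $\{B_1^g,B_2^g\}=\{B_1,B_2\}$ (a subgroup isomorphic to $S_{n/2}\wr S_2$); the setwise stabilizer of an $i$-subset is isomorphic to $S_i\times S_{n-i}$. A cover of a group is a collection of proper subgroups whose union is the group. *)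

theory Defs
  imports "HOL-Algebra.Sym_Groups"
begin

definition set_stab :: "nat \<Rightarrow> nat set \<Rightarrow> (nat \<Rightarrow> nat) set" where
  "set_stab n A = {g \<in> carrier (sym_group n). g ` A = A}"

definition part_stab :: "nat \<Rightarrow> nat set \<Rightarrow> nat set \<Rightarrow> (nat \<Rightarrow> nat) set" where
  "part_stab n B1 B2 = {g \<in> carrier (sym_group n). {g ` B1, g ` B2} = {B1, B2}}"

definition cover_H :: "nat \<Rightarrow> (nat \<Rightarrow> nat) set set" where
  "cover_H n =
     {part_stab n B ({1..n} - B) | B. B \<subseteq> {1..n} \<and> card B = n div 2}
   \<union> {carrier (alt_group n)}
   \<union> {set_stab n A | A. A \<subseteq> {1..n} \<and> 1 \<le> card A \<and> card A \<le> n div 3 - 1}"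

definition is_cover :: "('a, 'b) monoid_scheme \<Rightarrow> 'a set set \<Rightarrow> bool" where
  "is_cover G \<H> \<longleftrightarrow> (\<forall>K\<in>\<H>. subgroup K G \<and> K \<noteq> carrier G) \<and> \<Union>\<H> = carrier G"

end

theory Submission
  imports Defs "HOL-Combinatorics.Orbits"
begin

text \<open>
  Let \<open>n = 6t\<close> and let \<open>g\<close> be a permutation of \<open>{1..n}\<close>. A nonempty \<open>g\<close>-invariant set
  with fewer than \<open>2t\<close> points puts \<open>g\<close> into a set stabilizer of \<open>\<H>\<close>. Otherwise every nonempty
  invariant set, in particular every orbit, has at least \<open>2t\<close> points. If all orbits have even
  length, colouring each cycle alternately gives a bisection of \<open>{1..n}\<close> that \<open>g\<close> swaps; if all
  have odd length, \<open>g\<close> is the square of a power of itself and hence even. An odd orbit \<open>O\<^sub>1\<close>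
  and an even orbit \<open>O\<^sub>2\<close> cannot coexist: the rest of \<open>{1..n}\<close> is invariant of odd size, hence
  nonempty and of size at least \<open>2t\<close>, which forces \<open>|O\<^sub>1| = |O\<^sub>2| = 2t\<close>.
\<close>

subsection \<open>Orbits of permutations\<close>

lemma orbit_eq_if_mem:
  assumes "permutation f" "y \<in> orbit f x"
  shows "orbit f y = orbit f x"
  using assms by (metis cyclic_on_orbit' orbit_cyclic_eq3)

lemma orbits_disjoint:
  assumes "permutation f" "orbit f x \<noteq> orbit f y"
  shows "orbit f x \<inter> orbit f y = {}"
  using assms by (metis disjoint_iff orbit_eq_if_mem)

lemma image_orbit:
  assumes "permutation f"
  shows "f ` orbit f x = orbit f x"
proof -
  have "f ` orbit f x = {(f ^^ Suc n) x | n. True}"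
    unfolding orbit_altdef_permutation[OF assms] by auto
  also have "\<dots> = orbit f x"
    unfolding orbit_altdef by (auto intro: exI[of _ "Suc n" for n]) (metis Suc_pred funpow.simps(2) o_apply)
  finally show ?thesis .
qed

lemma card_orbit_eq_funpow_dist1:
  assumes "permutation f"
  shows "card (orbit f x) = funpow_dist1 f x x"
proof -
  have x: "x \<in> orbit f x" using permutation_self_in_orbit[OF assms] .
  show ?thesis
    using orbit_conv_funpow_dist1[OF x] inj_on_funpow_dist1[OF x] by (simp add: card_image)
qed

lemma funpow_card_orbit:
  assumes "permutation f"
  shows "(f ^^ card (orbit f x)) x = x"
  using funpow_dist1_prop[OF permutation_self_in_orbit[OF assms]]
  by (simp add: card_orbit_eq_funpow_dist1[OF assms])

lemma funpow_eq_imp_mod_card_orbit_eq: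
  assumes f: "permutation f" and eq: "(f ^^ k) x = (f ^^ j) x"
  shows "k mod card (orbit f x) = j mod card (orbit f x)"
proof -
  let ?m = "card (orbit f x)"
  have m: "?m = funpow_dist1 f x x" using card_orbit_eq_funpow_dist1[OF f] .
  have "(f ^^ (k mod ?m)) x = (f ^^ (j mod ?m)) x"
    using eq funpow_mod_eq[OF funpow_card_orbit[OF f]] by metis
  moreover have "inj_on (\<lambda>i. (f ^^ i) x) {0..<?m}"
    unfolding m by (rule inj_on_funpow_dist1[OF permutation_self_in_orbit[OF f]])
  moreover have "k mod ?m < ?m" "j mod ?m < ?m" unfolding m by simp_all
  ultimately show ?thesis by (auto dest: inj_onD)
qed

lemma funpow_eq_imp_even_iff:
  assumes "permutation f" "even (card (orbit f x))" "(f ^^ k) x = (f ^^ j) x"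
  shows "even k \<longleftrightarrow> even j"
  using funpow_eq_imp_mod_card_orbit_eq[OF assms(1,3)] assms(2) by (metis dvd_mod_iff)

subsection \<open>Permutations all of whose orbits have the same parity\<close>

lemma evenperm_if_odd_orbits:
  assumes g: "g permutes X" and X: "finite X" and odd: "\<forall>x\<in>X. odd (card (orbit g x))"
  shows "evenperm g"
proof -
  have pg: "permutation g" using permutes_imp_permutation[OF X g] .
  define N where "N = (\<Prod>x\<in>X. card (orbit g x))"
  have "odd N" unfolding N_def using odd by (simp add: even_prod_iff[OF X])
  have fix_N: "(g ^^ N) x = x" for x
  proof (cases "x \<in> X")
    case True
    then have "card (orbit g x) dvd N" unfolding N_def by (rule dvd_prodI[OF X])
    then have "N mod card (orbit g x) = 0" by simp
    then show ?thesis using funpow_mod_eq[OF funpow_card_orbit[OF pg]] by (metis funpow_0)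
  next
    case False
    then show ?thesis using permutes_not_in[OF permutes_funpow[OF g]] by blast
  qed
  define h where "h = g ^^ ((N + 1) div 2)"
  have "(N + 1) div 2 + (N + 1) div 2 = Suc N" using \<open>odd N\<close> by presburger
  then have "h \<circ> h = g ^^ Suc N" unfolding h_def funpow_add[symmetric] by simp
  also have "\<dots> = g" using fix_N by (simp add: funpow_Suc_right fun_eq_iff)
  finally have "g = h \<circ> h" by simp
  moreover have "permutation h" unfolding h_def by (rule permutation_funpow[OF pg])
  ultimately show ?thesis using evenperm_comp by metis
qed

text \<open>Points of each cycle are coloured by the parity of their distance from a fixed
  representative of the cycle.\<close>

lemma swapped_bisection_if_even_orbits:
  assumes g: "g permutes X" and X: "finite X" and even: "\<forall>x\<in>X. even (card (orbit g x))"
  obtains B where "B \<subseteq> X" "g ` B = X - B" "2 * card B = card X"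
proof -
  have pg: "permutation g" using permutes_imp_permutation[OF X g] .
  define r where "r x = (SOME z. z \<in> orbit g x)" for x
  define B where "B = {x \<in> X. \<exists>k. even k \<and> (g ^^ k) (r x) = x}"
  have swap: "g x \<in> B \<longleftrightarrow> x \<notin> B" if x: "x \<in> X" for x
  proof -
    have "r x \<in> orbit g x" unfolding r_def some_in_eq by (rule orbit_nonempty)
    then have orb_r: "orbit g (r x) = orbit g x" using orbit_eq_if_mem[OF pg] by blast
    then have "x \<in> orbit g (r x)" using permutation_self_in_orbit[OF pg] by simp
    then have "(g ^^ funpow_dist g (r x) x) (r x) = x" by (rule funpow_dist_prop)
    then obtain k where k: "(g ^^ k) (r x) = x" ..
    have parity: "even (card (orbit g (r x)))" using even x orb_r by simp
    have mem_B: "y \<in> B \<longleftrightarrow> even i" if "y \<in> X" "r y = r x" "(g ^^ i) (r x) = y" for y i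
    proof -
      have "y \<in> B \<longleftrightarrow> (\<exists>j. even j \<and> (g ^^ j) (r x) = (g ^^ i) (r x))"
        unfolding B_def using that by auto
      also have "\<dots> \<longleftrightarrow> even i" using funpow_eq_imp_even_iff[OF pg parity] by blast
      finally show ?thesis .
    qed
    have "r (g x) = r x" unfolding r_def using permutation_orbit_step[OF pg] by simp
    moreover have "g x \<in> X" using x permutes_in_image[OF g] by simp
    moreover have "(g ^^ Suc k) (r x) = g x" using k by simp
    ultimately have "g x \<in> B \<longleftrightarrow> odd k" using mem_B[of "g x" "Suc k"] by simp
    moreover have "x \<in> B \<longleftrightarrow> even k" using mem_B[OF x refl k] .
    ultimately show ?thesis by simp
  qed
  have BX: "B \<subseteq> X" unfolding B_def by blast
  have gB: "g ` B = X - B"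
  proof
    show "g ` B \<subseteq> X - B" using swap BX permutes_in_image[OF g] by blast
    show "X - B \<subseteq> g ` B"
    proof
      fix z assume z: "z \<in> X - B"
      then obtain y where "y \<in> X" "z = g y" using permutes_image[OF g] by (metis DiffD1 imageE)
      then show "z \<in> g ` B" using swap z by blast
    qed
  qed
  have "card (X - B) = card B"
    using gB card_image[OF inj_on_subset[OF permutes_inj[OF g] subset_UNIV]] by metis
  then have "2 * card B = card X"
    using card_Diff_subset[OF finite_subset[OF BX X] BX] card_mono[OF X BX] by linarith
  with BX gB that show thesis by blast
qed

lemma orbits_same_parity_if_large_invariant_sets:
  assumes g: "g permutes X" and X: "finite X" "even (card X)" "card X \<le> 3 * k"
    and large: "\<And>A. A \<subseteq> X \<Longrightarrow> g ` A = A \<Longrightarrow> A \<noteq> {} \<Longrightarrow> k \<le> card A"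
  shows "(\<forall>x\<in>X. even (card (orbit g x))) \<or> (\<forall>x\<in>X. odd (card (orbit g x)))"
proof (rule ccontr)
  assume "\<not> ?thesis"
  then obtain x y where x: "x \<in> X" "odd (card (orbit g x))" and y: "y \<in> X" "even (card (orbit g y))"
    by blast
  have pg: "permutation g" using permutes_imp_permutation[OF X(1) g] .
  let ?O1 = "orbit g x" and ?O2 = "orbit g y"
  let ?R = "X - (?O1 \<union> ?O2)"
  have sub: "?O1 \<subseteq> X" "?O2 \<subseteq> X" using permutes_orbit_subset[OF g] x(1) y(1) by auto
  have fin: "finite ?O1" "finite ?O2" using sub X(1) finite_subset by auto
  have inv: "g ` orbit g z = orbit g z" for z by (rule image_orbit[OF pg])
  have "?O1 \<noteq> ?O2" using x(2) y(2) by auto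
  then have disj: "?O1 \<inter> ?O2 = {}" by (rule orbits_disjoint[OF pg])
  have card_U: "card (?O1 \<union> ?O2) = card ?O1 + card ?O2" by (rule card_Un_disjoint[OF fin disj])
  have "card ?R = card X - card (?O1 \<union> ?O2)"
    using sub fin by (intro card_Diff_subset) auto
  then have card_R: "card ?R + card ?O1 + card ?O2 = card X"
    using card_U card_mono[OF X(1) Un_least[OF sub]] by linarith
  have "g ` ?R = g ` X - (g ` ?O1 \<union> g ` ?O2)"
    by (simp add: image_set_diff[OF permutes_inj[OF g]] image_Un)
  then have inv_R: "g ` ?R = ?R" by (simp add: permutes_image[OF g] inv)
  have "even (card ?R + card ?O1 + card ?O2)" unfolding card_R by (rule X(2))
  then have "odd (card ?R)" using x(2) y(2) by simp
  then have "?R \<noteq> {}" by (metis card.empty even_zero)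
  then have "k \<le> card ?R" by (rule large[OF Diff_subset inv_R])
  moreover have "k \<le> card ?O1" by (rule large[OF sub(1) inv orbit_nonempty])
  moreover have "k \<le> card ?O2" by (rule large[OF sub(2) inv orbit_nonempty])
  ultimately have "card ?O1 = k" "card ?O2 = k" using card_R X(3) by linarith+
  then show False using x(2) y(2) by simp
qed

lemma subgroup_set_stab: "subgroup (set_stab n A) (sym_group n)"
proof (rule group.subgroupI[OF sym_group_is_group])
  show "set_stab n A \<subseteq> carrier (sym_group n)" unfolding set_stab_def by auto
  show "set_stab n A \<noteq> {}"
    unfolding set_stab_def by (auto intro!: exI[of _ id] simp: sym_group_carrier permutes_id)
next
  fix g assume "g \<in> set_stab n A"
  then have g: "g permutes {1..n}" "g ` A = A" unfolding set_stab_def by (auto simp: sym_group_carrier)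
  then have "inv' g ` A = A" by (metis image_inv_f_f permutes_inj)
  then show "inv\<^bsub>sym_group n\<^esub> g \<in> set_stab n A"
    using g permutes_inv[OF g(1)] unfolding set_stab_def by (simp add: sym_group_carrier)
next
  fix g h assume "g \<in> set_stab n A" "h \<in> set_stab n A"
  moreover have "(g \<circ> h) ` A = g ` h ` A" by (rule image_comp[symmetric])
  ultimately show "g \<otimes>\<^bsub>sym_group n\<^esub> h \<in> set_stab n A"
    unfolding set_stab_def by (simp add: sym_group_mult sym_group_carrier permutes_compose)
qed

lemma subgroup_part_stab: "subgroup (part_stab n B1 B2) (sym_group n)"
proof (rule group.subgroupI[OF sym_group_is_group])
  show "part_stab n B1 B2 \<subseteq> carrier (sym_group n)" unfolding part_stab_def by auto
  show "part_stab n B1 B2 \<noteq> {}"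
    unfolding part_stab_def by (auto intro!: exI[of _ id] simp: sym_group_carrier permutes_id)
next
  fix g assume "g \<in> part_stab n B1 B2"
  then have g: "g permutes {1..n}" and eq: "{g ` B1, g ` B2} = {B1, B2}"
    unfolding part_stab_def by (auto simp: sym_group_carrier)
  have "{inv' g ` B1, inv' g ` B2} = image (inv' g) ` {g ` B1, g ` B2}"
    using eq by simp
  also have "\<dots> = {B1, B2}" by (simp add: image_inv_f_f permutes_inj[OF g])
  finally show "inv\<^bsub>sym_group n\<^esub> g \<in> part_stab n B1 B2"
    using g permutes_inv[OF g] unfolding part_stab_def by (simp add: sym_group_carrier)
next
  fix g h assume "g \<in> part_stab n B1 B2" "h \<in> part_stab n B1 B2"
  moreover have "{(g \<circ> h) ` B1, (g \<circ> h) ` B2} = image g ` {h ` B1, h ` B2}"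
    by (simp add: image_comp)
  ultimately show "g \<otimes>\<^bsub>sym_group n\<^esub> h \<in> part_stab n B1 B2"
    unfolding part_stab_def by (simp add: sym_group_mult sym_group_carrier permutes_compose)
qed

lemma alt_group_neq_sym_group:
  assumes "2 \<le> n"
  shows "carrier (alt_group n) \<noteq> carrier (sym_group n)"
proof -
  have "transpose 1 2 \<in> carrier (sym_group n)"
    using assms by (simp add: sym_group_carrier permutes_swap_id)
  moreover have "transpose 1 (2::nat) \<notin> carrier (alt_group n)"
    by (simp add: alt_group_carrier evenperm_swap)
  ultimately show ?thesis by blast
qed

lemma set_stab_neq_sym_group:
  assumes "A \<subseteq> {1..n}" "A \<noteq> {}" "A \<noteq> {1..n}"
  shows "set_stab n A \<noteq> carrier (sym_group n)"
proof -
  obtain a b where ab: "a \<in> A" "b \<in> {1..n}" "b \<notin> A" using assms by blast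
  then have "transpose a b \<in> carrier (sym_group n)"
    using assms(1) by (auto simp: sym_group_carrier intro!: permutes_swap_id)
  moreover have "b \<in> transpose a b ` A" using ab(1) by (metis image_eqI transpose_apply_first)
  then have "transpose a b \<notin> set_stab n A" using ab(3) unfolding set_stab_def by auto
  ultimately show ?thesis by blast
qed

lemma part_stab_neq_sym_group:
  assumes B: "B \<subseteq> {1..n}" "2 \<le> card B" "B \<noteq> {1..n}"
  shows "part_stab n B ({1..n} - B) \<noteq> carrier (sym_group n)"
proof -
  have "\<not> card B \<le> Suc 0" using B(2) by simp
  then obtain a c where ac: "a \<in> B" "c \<in> B" "a \<noteq> c"
    using card_le_Suc0_iff_eq[OF finite_subset[OF B(1)]] by blast
  obtain b where b: "b \<in> {1..n}" "b \<notin> B" using B by blast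
  let ?s = "transpose a b"
  have "?s \<in> carrier (sym_group n)"
    using B(1) ac b by (auto simp: sym_group_carrier intro!: permutes_swap_id)
  moreover have "b \<in> ?s ` B" "c \<in> ?s ` B"
    using ac b by (metis image_eqI transpose_apply_first transpose_apply_other)+
  then have "?s ` B \<noteq> B" "?s ` B \<noteq> {1..n} - B" using ac b by auto
  then have "{?s ` B, ?s ` ({1..n} - B)} \<noteq> {B, {1..n} - B}" by (metis insertE insertI1 singletonD)
  then have "?s \<notin> part_stab n B ({1..n} - B)" unfolding part_stab_def by simp
  ultimately show ?thesis by blast
qed

lemma proper_subgroup_if_mem_cover_H:
  assumes "6 \<le> n" "K \<in> cover_H n"
  shows "subgroup K (sym_group n) \<and> K \<noteq> carrier (sym_group n)"
proof -
  consider (part) B where "K = part_stab n B ({1..n} - B)" "B \<subseteq> {1..n}" "card B = n div 2"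
    | (alt) "K = carrier (alt_group n)"
    | (set) A where "K = set_stab n A" "A \<subseteq> {1..n}" "1 \<le> card A" "card A \<le> n div 3 - 1"
    using assms(2) unfolding cover_H_def by blast
  then show ?thesis
  proof cases
    case part
    then have "B \<noteq> {1..n}" using assms(1) by auto
    then show ?thesis using part assms(1) subgroup_part_stab part_stab_neq_sym_group by auto
  next
    case alt
    then show ?thesis using assms(1) alt_group_is_subgroup alt_group_neq_sym_group by simp
  next
    case set
    then have "A \<noteq> {}" "A \<noteq> {1..n}" using assms(1) by auto
    then show ?thesis using set subgroup_set_stab set_stab_neq_sym_group by blast
  qed
qed

lemma perm_in_Union_cover_H:
  assumes g: "g permutes {1..n}" and n: "n = 6 * t"
  shows "g \<in> \<Union>(cover_H n)"
proof (cases "\<exists>A \<subseteq> {1..n}. g ` A = A \<and> A \<noteq> {} \<and> card A < 2 * t")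
  case True
  then obtain A where A: "A \<subseteq> {1..n}" "g ` A = A" "A \<noteq> {}" "card A < 2 * t" by blast
  have "1 \<le> card A" using finite_subset[OF A(1)] A(3) by (simp add: Suc_leI card_gt_0_iff)
  moreover have "card A \<le> n div 3 - 1" using A(4) n by simp
  ultimately have "set_stab n A \<in> cover_H n" unfolding cover_H_def using A(1) by blast
  moreover have "g \<in> set_stab n A" unfolding set_stab_def using g A(2) by (simp add: sym_group_carrier)
  ultimately show ?thesis by blast
next
  case False
  then have large: "2 * t \<le> card A" if "A \<subseteq> {1..n}" "g ` A = A" "A \<noteq> {}" for A
    using that by (meson not_less)
  have "even (card {1..n})" "card {1..n} \<le> 3 * (2 * t)" using n by simp_all
  then have "(\<forall>x\<in>{1..n}. even (card (orbit g x))) \<or> (\<forall>x\<in>{1..n}. odd (card (orbit g x)))"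
    by (rule orbits_same_parity_if_large_invariant_sets[OF g finite_atLeastAtMost _ _ large])
  then show ?thesis
  proof
    assume "\<forall>x\<in>{1..n}. even (card (orbit g x))"
    then obtain B where B: "B \<subseteq> {1..n}" "g ` B = {1..n} - B" "2 * card B = n"
      using swapped_bisection_if_even_orbits[OF g] by auto
    then have "g ` ({1..n} - B) = B"
      using permutes_image[OF g] image_set_diff[OF permutes_inj[OF g]] by auto
    then have "g \<in> part_stab n B ({1..n} - B)"
      using g B(2) unfolding part_stab_def by (auto simp: sym_group_carrier)
    moreover have "part_stab n B ({1..n} - B) \<in> cover_H n" unfolding cover_H_def using B by auto
    ultimately show ?thesis by blast
  next
    assume "\<forall>x\<in>{1..n}. odd (card (orbit g x))"
    then have "g \<in> carrier (alt_group n)"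
      using evenperm_if_odd_orbits[OF g] g by (simp add: alt_group_carrier)
    then show ?thesis unfolding cover_H_def by blast
  qed
qed

theorem lemma3p3:
  fixes n :: nat
  assumes "n > 0" and "n mod 6 = 0"
  shows "\<Union>(cover_H n) = carrier (sym_group n) \<and> is_cover (sym_group n) (cover_H n)"
proof -
  obtain t where n: "n = 6 * t" using assms(2) by (metis mod_0_imp_dvd dvdE)
  have proper: "subgroup K (sym_group n) \<and> K \<noteq> carrier (sym_group n)" if "K \<in> cover_H n" for K
    using proper_subgroup_if_mem_cover_H[OF _ that] n assms(1) by simp
  have "\<Union>(cover_H n) = carrier (sym_group n)"
  proof
    show "\<Union>(cover_H n) \<subseteq> carrier (sym_group n)" using proper subgroup.subset by blast
    show "carrier (sym_group n) \<subseteq> \<Union>(cover_H n)"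
      using perm_in_Union_cover_H[OF _ n] by (auto simp: sym_group_carrier)
  qed
  then show ?thesis using proper unfolding is_cover_def by blast
qed

end
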